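(* Let $P$ be a finite lattice, let $\mu:2^P\to\mathbb{R}_{\ge0}$ be additive, and let $r(f)=\mu(P\setminus\Phi f)$ for $f\in\mathcal{L}_P$. For $f\in\mathcal{L}_P$ define $\mathrm{resilience}(f)=\min\{r(s): s\in\mathcal{L}_P,\ f+s=1\}$ and $\mathrm{fragility}(f)=\max\{r(w): w\in\mathcal{L}_P,\ w\le f,\ w\text{ prime}\}$. Then $\mathrm{fragility}(f)+\mathrm{resilience}(f)=r(1)$.
   Context: $P$ is a finite lattice with greatest element $\hat p$. $\mathcal{L}_P$ is the set of maps $f:P\to P$ satisfying (A.1) $a\le f(a)$; (A.2) $a\le b\Rightarrow f(a)\le f(b)$; (A.3) $f(f(a))=f(a)$, ordered pointwise; it is a lattice with join $+$ and greatest element $1:a\mapsto\hat p$. $\Phi f=\{a:f(a)=a\}$. $f$ is prime if $P\setminus\Phi f$ is closed under $\wedge$. *)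

theory Defs
  imports Complex_Main
begin

definition closure_op :: "('a::{finite,bounded_lattice} \<Rightarrow> 'a) \<Rightarrow> bool" where
  "closure_op f \<longleftrightarrow> (\<forall>a. a \<le> f a) \<and> (\<forall>a b. a \<le> b \<longrightarrow> f a \<le> f b) \<and> (\<forall>a. f (f a) = f a)"

definition Fix :: "('a \<Rightarrow> 'a) \<Rightarrow> 'a set" where
  "Fix f = {a. f a = a}"

definition one_cl :: "'a::{finite,bounded_lattice} \<Rightarrow> 'a" where
  "one_cl = (\<lambda>a. top)"

definition cl_join :: "('a::{finite,bounded_lattice} \<Rightarrow> 'a) \<Rightarrow> ('a \<Rightarrow> 'a) \<Rightarrow> ('a \<Rightarrow> 'a)" where
  "cl_join f g = (THE j. closure_op j \<and> f \<le> j \<and> g \<le> j \<and>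
                      (\<forall>k. closure_op k \<and> f \<le> k \<and> g \<le> k \<longrightarrow> j \<le> k))"

definition prime_cl :: "('a::{finite,bounded_lattice} \<Rightarrow> 'a) \<Rightarrow> bool" where
  "prime_cl f \<longleftrightarrow> (\<forall>a b. a \<notin> Fix f \<longrightarrow> b \<notin> Fix f \<longrightarrow> inf a b \<notin> Fix f)"

definition additive_measure :: "('a set \<Rightarrow> real) \<Rightarrow> bool" where
  "additive_measure \<mu> \<longleftrightarrow> (\<forall>A. \<mu> A \<ge> 0) \<and>
     (\<forall>A B. A \<inter> B = {} \<longrightarrow> \<mu> (A \<union> B) = \<mu> A + \<mu> B)"

definition rk :: "('a set \<Rightarrow> real) \<Rightarrow> ('a \<Rightarrow> 'a) \<Rightarrow> real" where
  "rk \<mu> f = \<mu> (UNIV - Fix f)"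

definition resilience :: "('a set \<Rightarrow> real) \<Rightarrow> ('a::{finite,bounded_lattice} \<Rightarrow> 'a) \<Rightarrow> real" where
  "resilience \<mu> f = Min (rk \<mu> ` {s. closure_op s \<and> cl_join f s = one_cl})"

definition fragility :: "('a set \<Rightarrow> real) \<Rightarrow> ('a::{finite,bounded_lattice} \<Rightarrow> 'a) \<Rightarrow> real" where
  "fragility \<mu> f = Max (rk \<mu> ` {w. closure_op w \<and> w \<le> f \<and> prime_cl w})"

end

theory Submission
  imports Defs
begin

text \<open>A closure operator is determined by its set of fixed points, which ranges over the Moore
families (subsets containing \<open>top\<close> and closed under \<open>inf\<close>); joins of closure operators
correspond to intersections of Moore families. Thus \<open>f + s = 1\<close> says \<open>Fix f \<inter> Fix s = {top}\<close>,
and \<open>w\<close> is prime exactly when \<open>insert top (- Fix w)\<close> is again a Moore family.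
A prime \<open>w \<le> f\<close> yields the complement \<open>s\<close> with \<open>Fix s = insert top (- Fix w)\<close>, and
\<open>r(w) + r(s) = r(1)\<close> by additivity, so fragility plus resilience is at most \<open>r(1)\<close>.
Conversely, for \<open>f + s = 1\<close> enlarge \<open>Fix s\<close> to a Moore family \<open>S\<close> that is maximal subject to
\<open>S \<inter> Fix f = {top}\<close>; maximality forces \<open>insert top (- S)\<close> to be a Moore family, the fixed
points of a prime \<open>w \<le> f\<close> with \<open>r(w) + r(s) \<ge> r(1)\<close>.\<close>

definition moore :: "'a::{finite,bounded_lattice} set \<Rightarrow> bool" where
  "moore M \<longleftrightarrow> top \<in> M \<and> (\<forall>a\<in>M. \<forall>b\<in>M. inf a b \<in> M)"

definition moore_cl :: "'a::{finite,bounded_lattice} set \<Rightarrow> 'a \<Rightarrow> 'a" where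
  "moore_cl M a = Inf_fin {b \<in> M. a \<le> b}"

lemma moore_Int:
  assumes "moore M" "moore N"
  shows "moore (M \<inter> N)"
  using assms by (auto simp: moore_def)

lemma moore_Inf_fin:
  assumes "moore M" "finite A" "A \<noteq> {}" "A \<subseteq> M"
  shows "Inf_fin A \<in> M"
  using assms(2-4)
proof (induction A rule: finite_ne_induct)
  case (insert x F)
  then show ?case using assms(1) by (simp add: Inf_fin.insert moore_def)
qed simp

lemma
  assumes "moore M"
  shows moore_cl_ge: "a \<le> moore_cl M a"
    and moore_cl_mem: "moore_cl M a \<in> M"
    and moore_cl_least: "b \<in> M \<Longrightarrow> a \<le> b \<Longrightarrow> moore_cl M a \<le> b"
proof -
  have ne: "{b \<in> M. a \<le> b} \<noteq> {}" using assms by (auto simp: moore_def)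
  show "a \<le> moore_cl M a" unfolding moore_cl_def by (rule Inf_fin.boundedI) (use ne in auto)
  show "moore_cl M a \<in> M" unfolding moore_cl_def by (rule moore_Inf_fin[OF assms]) (use ne in auto)
  show "b \<in> M \<Longrightarrow> a \<le> b \<Longrightarrow> moore_cl M a \<le> b" unfolding moore_cl_def
    by (rule Inf_fin.coboundedI) auto
qed

lemma moore_cl_eq: "moore M \<Longrightarrow> a \<in> M \<Longrightarrow> moore_cl M a = a"
  by (simp add: antisym moore_cl_ge moore_cl_least)

lemma closure_op_moore_cl:
  assumes "moore M"
  shows "closure_op (moore_cl M)"
  unfolding closure_op_def
  using assms moore_cl_ge moore_cl_least moore_cl_mem moore_cl_eq by (blast intro: order_trans)

lemma Fix_moore_cl:
  assumes "moore M"
  shows "Fix (moore_cl M) = M"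
  unfolding Fix_def by (auto simp: moore_cl_eq[OF assms]) (metis assms moore_cl_mem)

lemma closure_op_ext: "closure_op f \<Longrightarrow> a \<le> f a"
  and closure_op_mono: "closure_op f \<Longrightarrow> a \<le> b \<Longrightarrow> f a \<le> f b"
  and closure_op_idem: "closure_op f \<Longrightarrow> f (f a) = f a"
  by (simp_all add: closure_op_def)

lemma moore_Fix:
  assumes "closure_op f"
  shows "moore (Fix f)"
  unfolding moore_def Fix_def
proof (intro conjI ballI; clarsimp)
  show "f top = top" using closure_op_ext[OF assms, of top] by (simp add: top_unique)
next
  fix a b assume "f a = a" "f b = b"
  then have "f (inf a b) \<le> inf a b"
    using closure_op_mono[OF assms, of "inf a b"] by (metis inf_le1 inf_le2 le_inf_iff)
  then show "f (inf a b) = inf a b" using closure_op_ext[OF assms] by (simp add: antisym)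
qed

lemma top_in_Fix: "closure_op f \<Longrightarrow> top \<in> Fix f"
  using moore_Fix moore_def by blast

lemma closure_op_le_iff_Fix_subset:
  assumes "closure_op f" "closure_op w"
  shows "w \<le> f \<longleftrightarrow> Fix f \<subseteq> Fix w"
proof
  assume "w \<le> f"
  show "Fix f \<subseteq> Fix w"
  proof
    fix a assume "a \<in> Fix f"
    then have "w a \<le> a" using le_funD[OF \<open>w \<le> f\<close>, of a] by (simp add: Fix_def)
    then show "a \<in> Fix w" using closure_op_ext[OF assms(2), of a] by (simp add: Fix_def antisym)
  qed
next
  assume Fix_le: "Fix f \<subseteq> Fix w"
  show "w \<le> f"
  proof (rule le_funI)
    fix a
    have "f a \<in> Fix w" using Fix_le closure_op_idem[OF assms(1)] by (auto simp: Fix_def)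
    then show "w a \<le> f a"
      using closure_op_mono[OF assms(2) closure_op_ext[OF assms(1)], of a] by (simp add: Fix_def)
  qed
qed

lemma cl_join_eq_moore_cl:
  assumes "closure_op f" "closure_op s"
  shows "cl_join f s = moore_cl (Fix f \<inter> Fix s)"
proof -
  define J where "J = moore_cl (Fix f \<inter> Fix s)"
  have M: "moore (Fix f \<inter> Fix s)" using moore_Int moore_Fix assms by blast
  have J: "closure_op J" "Fix J = Fix f \<inter> Fix s"
    using closure_op_moore_cl[OF M] Fix_moore_cl[OF M] by (simp_all add: J_def)
  have lub: "closure_op k \<and> f \<le> k \<and> s \<le> k \<longleftrightarrow> closure_op k \<and> J \<le> k" for k
  proof (cases "closure_op k")
    case True
    then show ?thesis using closure_op_le_iff_Fix_subset[OF True] assms J by auto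
  qed simp
  have "closure_op J \<and> f \<le> J \<and> s \<le> J \<and>
      (\<forall>k. closure_op k \<and> f \<le> k \<and> s \<le> k \<longrightarrow> J \<le> k)"
    using lub J(1) by blast
  moreover have "j = J" if "closure_op j \<and> f \<le> j \<and> s \<le> j \<and>
      (\<forall>k. closure_op k \<and> f \<le> k \<and> s \<le> k \<longrightarrow> j \<le> k)" for j
    using that lub J(1) by (blast intro: antisym)
  ultimately show ?thesis unfolding cl_join_def J_def[symmetric] by (rule the_equality)
qed

lemma Fix_one_cl: "Fix (one_cl :: 'a::{finite,bounded_lattice} \<Rightarrow> 'a) = {top}"
  by (auto simp: Fix_def one_cl_def)

lemma closure_op_one_cl: "closure_op (one_cl :: 'a::{finite,bounded_lattice} \<Rightarrow> 'a)"
  by (simp add: closure_op_def one_cl_def)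

lemma cl_join_eq_one_cl_iff:
  assumes "closure_op f" "closure_op s"
  shows "cl_join f s = one_cl \<longleftrightarrow> Fix f \<inter> Fix s = {top}"
proof -
  have M: "moore (Fix f \<inter> Fix s)" using moore_Int moore_Fix assms by blast
  have "moore_cl (Fix f \<inter> Fix s) = one_cl" if "Fix f \<inter> Fix s = {top}"
    using moore_cl_mem[OF M] that by (auto simp: one_cl_def)
  then show ?thesis
    using Fix_moore_cl[OF M] Fix_one_cl cl_join_eq_moore_cl[OF assms] by metis
qed

lemma prime_cl_iff_moore:
  assumes "closure_op w"
  shows "prime_cl w \<longleftrightarrow> moore (insert top (- Fix w))"
proof -
  have inf_ne_top: "inf a b \<noteq> top" if "a \<notin> Fix w" for a b
    using that top_in_Fix[OF assms] by (metis inf_le1 top_unique)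
  show ?thesis
  proof
    assume "prime_cl w"
    then show "moore (insert top (- Fix w))" unfolding prime_cl_def moore_def
      by (intro conjI ballI insertI1) (auto simp: inf.absorb2 inf.absorb1)
  next
    assume "moore (insert top (- Fix w))"
    then show "prime_cl w" using inf_ne_top unfolding prime_cl_def moore_def by blast
  qed
qed

lemma additive_measure_Un:
  "additive_measure \<mu> \<Longrightarrow> A \<inter> B = {} \<Longrightarrow> \<mu> (A \<union> B) = \<mu> A + \<mu> B"
  by (simp add: additive_measure_def)

lemma additive_measure_mono:
  assumes "additive_measure \<mu>" "A \<subseteq> B"
  shows "\<mu> A \<le> \<mu> B"
proof -
  have "A \<union> (B - A) = B" "A \<inter> (B - A) = {}" using assms(2) by auto
  then have "\<mu> B = \<mu> A + \<mu> (B - A)" using additive_measure_Un[OF assms(1)] by metis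
  then show ?thesis using assms(1) by (simp add: additive_measure_def)
qed

lemma rk_one_cl_split:
  assumes "additive_measure \<mu>" "top \<in> M"
  shows "\<mu> (- M) + \<mu> (M - {top}) = rk \<mu> one_cl"
proof -
  have "\<mu> (- M \<union> (M - {top})) = \<mu> (- M) + \<mu> (M - {top})"
    by (rule additive_measure_Un[OF assms(1)]) auto
  moreover have "- M \<union> (M - {top}) = UNIV - {top}" using assms(2) by auto
  ultimately show ?thesis by (simp add: rk_def Fix_one_cl)
qed

lemma complement_of_prime_cl:
  assumes \<mu>: "additive_measure \<mu>" and "closure_op f" "closure_op w" "w \<le> f" "prime_cl w"
  shows "\<exists>s. closure_op s \<and> cl_join f s = one_cl \<and> rk \<mu> w + rk \<mu> s = rk \<mu> one_cl"
proof -
  define S where "S = insert top (- Fix w)"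
  have M: "moore S" using prime_cl_iff_moore[OF assms(3)] assms(5) by (simp add: S_def)
  have s: "closure_op (moore_cl S)" "Fix (moore_cl S) = S"
    using closure_op_moore_cl[OF M] Fix_moore_cl[OF M] .
  have "Fix f \<subseteq> Fix w" using closure_op_le_iff_Fix_subset assms(2-4) by blast
  then have "Fix f \<inter> S = {top}" using top_in_Fix[OF assms(2)] by (auto simp: S_def)
  then have "cl_join f (moore_cl S) = one_cl"
    using cl_join_eq_one_cl_iff[OF assms(2) s(1)] s(2) by simp
  moreover have "UNIV - S = Fix w - {top}" by (auto simp: S_def)
  then have "rk \<mu> w + rk \<mu> (moore_cl S) = rk \<mu> one_cl"
    using rk_one_cl_split[OF \<mu> top_in_Fix[OF assms(3)]] s(2)
    by (simp add: rk_def Compl_eq_Diff_UNIV)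
  ultimately show ?thesis using s(1) by blast
qed

lemma moore_Un_inf_image:
  assumes "moore S"
  shows "moore (S \<union> inf u ` S)"
proof -
  have decomp: "\<exists>v\<in>{top, u}. \<exists>t\<in>S. a = inf v t" if "a \<in> S \<union> inf u ` S" for a
    using that
  proof
    assume "a \<in> S" then show ?thesis by simp
  qed auto
  have "inf a b \<in> S \<union> inf u ` S"
    if a: "a \<in> S \<union> inf u ` S" and b: "b \<in> S \<union> inf u ` S" for a b
  proof -
    obtain v t where v: "v \<in> {top, u}" "t \<in> S" "a = inf v t" using decomp[OF a] by blast
    obtain v' t' where v': "v' \<in> {top, u}" "t' \<in> S" "b = inf v' t'" using decomp[OF b] by blast
    have "inf t t' \<in> S" using assms v(2) v'(2) by (simp add: moore_def)
    moreover have "inf a b = inf (inf v v') (inf t t')" using v(3) v'(3) by (simp add: inf_aci)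
    moreover have "inf v v' \<in> {top, u}" using v(1) v'(1) by auto
    ultimately show ?thesis by auto
  qed
  then show ?thesis using assms by (simp add: moore_def)
qed

text \<open>Points outside a maximal \<open>S\<close> must create new nontrivial intersections with \<open>F\<close>; meeting two
such witnesses below \<open>inf x y \<in> S - {top}\<close> yields an element of \<open>S \<inter> F\<close> other than \<open>top\<close>.\<close>
lemma maximal_moore_complement:
  assumes F: "moore F" and S: "moore S" "S \<inter> F = {top}"
    and max: "\<And>T. moore T \<Longrightarrow> T \<inter> F = {top} \<Longrightarrow> S \<subseteq> T \<Longrightarrow> T = S"
  shows "moore (insert top (- S))"
proof -
  have top: "top \<in> S" "top \<in> F" using S(1) F by (simp_all add: moore_def)
  have witness: "\<exists>t\<in>S. inf u t \<in> F \<and> inf u t \<noteq> top" if "u \<notin> S" for u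
  proof (rule ccontr)
    assume "\<not> ?thesis"
    then have "(S \<union> inf u ` S) \<inter> F = {top}" using S(2) top by auto
    then have "S \<union> inf u ` S = S" by (rule max[OF moore_Un_inf_image[OF S(1)]]) simp
    moreover have "u \<in> inf u ` S" using top(1) by (metis image_eqI inf_top.right_neutral)
    ultimately show False using that by blast
  qed
  have "inf x y \<in> insert top (- S)" if x: "x \<in> insert top (- S)" and y: "y \<in> insert top (- S)"
    for x y
  proof (rule ccontr)
    assume "inf x y \<notin> insert top (- S)"
    then have xy: "inf x y \<in> S" "inf x y \<noteq> top" by simp_all
    then have "x \<noteq> top" "y \<noteq> top" using x y by auto
    then have "x \<notin> S" "y \<notin> S" using x y by simp_all
    then obtain t u where tu: "t \<in> S" "inf x t \<in> F" "u \<in> S" "inf y u \<in> F"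
      using witness by blast
    have "inf (inf x t) (inf y u) = inf (inf x y) (inf t u)" by (simp add: inf_aci)
    moreover have "inf (inf x t) (inf y u) \<in> F" using F tu by (simp add: moore_def)
    moreover have "inf (inf x y) (inf t u) \<in> S" using S(1) tu xy by (simp add: moore_def)
    ultimately have "inf (inf x y) (inf t u) \<in> S \<inter> F" by simp
    then have "inf (inf x y) (inf t u) = top" using S(2) by simp
    then have "inf x y = top" by (metis inf_le1 top_unique)
    then show False using xy by simp
  qed
  then show ?thesis by (simp add: moore_def)
qed

lemma prime_cl_of_complement:
  assumes \<mu>: "additive_measure \<mu>" and f: "closure_op f" and s: "closure_op s"
    and "cl_join f s = one_cl"
  shows "\<exists>w. closure_op w \<and> w \<le> f \<and> prime_cl w \<and> rk \<mu> one_cl \<le> rk \<mu> w + rk \<mu> s"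
proof -
  define Q where "Q = {T. moore T \<and> T \<inter> Fix f = {top}}"
  have "Fix s \<in> Q"
    using cl_join_eq_one_cl_iff assms(2-4) moore_Fix[OF s] by (auto simp: Q_def)
  then obtain S where "S \<in> Q" "Fix s \<subseteq> S" and max: "\<And>T. T \<in> Q \<Longrightarrow> S \<subseteq> T \<Longrightarrow> T = S"
    using finite_has_maximal2[of Q "Fix s"] by (metis finite_code finite_subset subset_UNIV)
  then have S: "moore S" "S \<inter> Fix f = {top}" by (auto simp: Q_def)
  define W where "W = insert top (- S)"
  have M: "moore W"
    unfolding W_def
    by (rule maximal_moore_complement[OF moore_Fix[OF f] S]) (rule max, simp_all add: Q_def)
  have top: "top \<in> S" using S(1) by (simp add: moore_def)
  have Fix_w: "Fix (moore_cl W) = W" and w: "closure_op (moore_cl W)"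
    using Fix_moore_cl closure_op_moore_cl M by blast+
  have "insert top (- W) = S" using top by (auto simp: W_def)
  then have "moore (insert top (- W))" using S(1) by simp
  then have "prime_cl (moore_cl W)" using prime_cl_iff_moore w Fix_w by metis
  moreover have "moore_cl W \<le> f"
    using closure_op_le_iff_Fix_subset f w Fix_w S(2) by (auto simp: W_def)
  moreover have "rk \<mu> one_cl \<le> rk \<mu> (moore_cl W) + rk \<mu> s"
  proof -
    have "- W = S - {top}" by (auto simp: W_def)
    moreover have "\<mu> (- S) \<le> \<mu> (- Fix s)"
      using additive_measure_mono[OF \<mu>] \<open>Fix s \<subseteq> S\<close> by blast
    ultimately show ?thesis
      using rk_one_cl_split[OF \<mu> top] Fix_w by (simp add: rk_def Compl_eq_Diff_UNIV)
  qed
  ultimately show ?thesis using w by blast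
qed

theorem mainTheorem17:
  fixes \<mu> :: "'a::{finite,bounded_lattice} set \<Rightarrow> real" and f :: "'a \<Rightarrow> 'a"
  assumes "additive_measure \<mu>" and "closure_op f"
  shows "fragility \<mu> f + resilience \<mu> f = rk \<mu> one_cl"
proof -
  define P where "P = {w. closure_op w \<and> w \<le> f \<and> prime_cl w}"
  define R where "R = {s. closure_op s \<and> cl_join f s = one_cl}"
  have "id \<in> P"
    using assms(2) by (auto simp: P_def closure_op_def prime_cl_def Fix_def le_fun_def)
  then have "fragility \<mu> f \<in> rk \<mu> ` P"
    unfolding fragility_def P_def[symmetric] by (intro Max_in) auto
  then obtain w where w: "w \<in> P" "fragility \<mu> f = rk \<mu> w" by blast
  have "one_cl \<in> R"
    using cl_join_eq_one_cl_iff[OF assms(2) closure_op_one_cl] closure_op_one_cl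
      top_in_Fix[OF assms(2)] Fix_one_cl by (auto simp: R_def)
  then have "resilience \<mu> f \<in> rk \<mu> ` R"
    unfolding resilience_def R_def[symmetric] by (intro Min_in) auto
  then obtain s where s: "s \<in> R" "resilience \<mu> f = rk \<mu> s" by blast
  obtain s' where "s' \<in> R" "rk \<mu> w + rk \<mu> s' = rk \<mu> one_cl"
    using complement_of_prime_cl[OF assms] w(1) by (auto simp: P_def R_def)
  moreover have "rk \<mu> s \<le> rk \<mu> s'"
    unfolding s(2)[symmetric] resilience_def R_def[symmetric] using \<open>s' \<in> R\<close> by simp
  moreover obtain w' where "w' \<in> P" "rk \<mu> one_cl \<le> rk \<mu> w' + rk \<mu> s"
    using prime_cl_of_complement[OF assms] s(1) by (auto simp: P_def R_def)
  moreover have "rk \<mu> w' \<le> rk \<mu> w"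
    unfolding w(2)[symmetric] fragility_def P_def[symmetric] using \<open>w' \<in> P\<close> by simp
  ultimately show ?thesis using w(2) s(2) by linarith
qed

end
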